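(* Let $P$ be a finite partial IP loop such that $3\mid o_3(P)$, $\#P\equiv 4\pmod 6$ and $\Gamma(P)\subseteq O_2(P)\times O_2(P)$, and let $G(P)$ be its gap graph. Then (a) every vertex of $G(P)$ has even degree, and (b) the number of edges of $G(P)$ is divisible by $3$.
   Context: A partial IP loop is a set $P$ with a partial binary operation $(x,y)\mapsto xy$ defined on a subset $D(P)\subseteq P\times P$ (the domain) such that: (1) there is $1\in P$ with $(1,x),(x,1)\in D(P)$ and $1x=x1=x$ for all $x\in P$; (2) for each $x\in P$ there is a unique $y\in P$, denoted $x^{-1}$, with $(x,y),(y,x)\in D(P)$ and $xy=yx=1$; (3) whenever $(x,y)\in D(P)$, we have $(x^{-1},xy),(xy,y^{-1})\in D(P)$ and $x^{-1}(xy)=y$, $(xy)y^{-1}=x$. The set of gaps is $\Gamma(P)=(P\times P)\setminus D(P)$. $O_2(P)=\{x\in P: (x,x)\in D(P),\ x\ne 1,\ xx=1\}$; $O_3(P)=\{x\in P: (x,x)\in D(P),\ (x,xx)\in D(P),\ x\neq 1,\ x(xx)=1\}$ and $o_3(P)=\#O_3(P)$. When $\Gamma(P)\subseteq O_2(P)\times O_2(P)$ (so $\Gamma(P)$ is irreflexive and symmetric), the gap graph $G(P)$ is the simple undirected graph whose vertices are the $x\in O_2(P)$ with $(x,y)\in\Gamma(P)$ for some $y$, and whose edges are the sets $\{x,y\}$ with $(x,y)\in\Gamma(P)$. *)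

theory Defs
  imports Main
begin

text \<open>A partial IP loop with carrier P, domain D \<subseteq> P \<times> P, partial multiplication m
  (only meaningful on D), and identity e.\<close>

definition ploop_inv :: "'a set \<Rightarrow> ('a \<times> 'a) set \<Rightarrow> ('a \<Rightarrow> 'a \<Rightarrow> 'a) \<Rightarrow> 'a \<Rightarrow> 'a \<Rightarrow> 'a" where
  "ploop_inv P D m e x = (THE y. y \<in> P \<and> (x, y) \<in> D \<and> (y, x) \<in> D \<and> m x y = e \<and> m y x = e)"

definition partial_ip_loop :: "'a set \<Rightarrow> ('a \<times> 'a) set \<Rightarrow> ('a \<Rightarrow> 'a \<Rightarrow> 'a) \<Rightarrow> 'a \<Rightarrow> bool" where
  "partial_ip_loop P D m e \<longleftrightarrow>
     D \<subseteq> P \<times> P \<and>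
     (\<forall>(x, y) \<in> D. m x y \<in> P) \<and>
     e \<in> P \<and>
     (\<forall>x \<in> P. (e, x) \<in> D \<and> (x, e) \<in> D \<and> m e x = x \<and> m x e = x) \<and>
     (\<forall>x \<in> P. \<exists>!y. y \<in> P \<and> (x, y) \<in> D \<and> (y, x) \<in> D \<and> m x y = e \<and> m y x = e) \<and>
     (\<forall>(x, y) \<in> D.
        (ploop_inv P D m e x, m x y) \<in> D \<and> (m x y, ploop_inv P D m e y) \<in> D \<and>
        m (ploop_inv P D m e x) (m x y) = y \<and> m (m x y) (ploop_inv P D m e y) = x)"

definition gaps :: "'a set \<Rightarrow> ('a \<times> 'a) set \<Rightarrow> ('a \<times> 'a) set" where
  "gaps P D = (P \<times> P) - D"

definition O2 :: "'a set \<Rightarrow> ('a \<times> 'a) set \<Rightarrow> ('a \<Rightarrow> 'a \<Rightarrow> 'a) \<Rightarrow> 'a \<Rightarrow> 'a set" where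
  "O2 P D m e = {x \<in> P. (x, x) \<in> D \<and> x \<noteq> e \<and> m x x = e}"

definition O3 :: "'a set \<Rightarrow> ('a \<times> 'a) set \<Rightarrow> ('a \<Rightarrow> 'a \<Rightarrow> 'a) \<Rightarrow> 'a \<Rightarrow> 'a set" where
  "O3 P D m e = {x \<in> P. (x, x) \<in> D \<and> (x, m x x) \<in> D \<and> x \<noteq> e \<and> m x (m x x) = e}"

definition gap_vertices :: "'a set \<Rightarrow> ('a \<times> 'a) set \<Rightarrow> ('a \<Rightarrow> 'a \<Rightarrow> 'a) \<Rightarrow> 'a \<Rightarrow> 'a set" where
  "gap_vertices P D m e = {x \<in> O2 P D m e. \<exists>y. (x, y) \<in> gaps P D}"

definition gap_edges :: "'a set \<Rightarrow> ('a \<times> 'a) set \<Rightarrow> 'a set set" where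
  "gap_edges P D = {{x, y} | x y. (x, y) \<in> gaps P D}"

definition gap_degree :: "'a set \<Rightarrow> ('a \<times> 'a) set \<Rightarrow> 'a \<Rightarrow> nat" where
  "gap_degree P D v = card {E \<in> gap_edges P D. v \<in> E}"

end

theory Submission
  imports Defs "HOL-Computational_Algebra.Primes"
begin

text \<open>For a vertex \<open>v\<close> of the gap graph we have \<open>v\<^sup>-\<^sup>1 = v\<close>, so \<open>y \<mapsto> v y\<close> is a
  fixed-point-free involution of the row \<open>{y. (v, y) \<in> D}\<close>. The row therefore has even size,
  and so has its complement in the even set \<open>P\<close>, which is the neighbourhood of \<open>v\<close>.

  For the edges, \<open>(x, y) \<mapsto> (y, (x y)\<^sup>-\<^sup>1)\<close> is a permutation of \<open>D\<close> of order 3 whose fixed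
  points are the pairs \<open>(x, x)\<close> with \<open>x = 1\<close> or \<open>x \<in> O\<^sub>3\<close>. Counting modulo 3 gives
  \<open>#D \<equiv> 1 + o\<^sub>3 \<equiv> 1\<close>, hence \<open>#\<Gamma> = #P\<^sup>2 - #D \<equiv> 0\<close>; as \<open>\<Gamma>\<close> is symmetric and irreflexive,
  \<open>#\<Gamma>\<close> is twice the number of edges. Both counts rest on the fact that a map of prime
  period \<open>p\<close> on a finite set has as many points as fixed points, modulo \<open>p\<close>.\<close>

lemma fixpoint_if_coprime_periods:
  fixes p d :: nat
  assumes "(f ^^ p) x = x" "(f ^^ d) x = x" "coprime d p" "d \<noteq> 0" "p > 1"
  shows "f x = x"
proof -
  obtain a b where bezout: "d * a = p * b + 1"
    using bezout_nat[OF \<open>d \<noteq> 0\<close>, of p] \<open>coprime d p\<close> by auto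
  have "(p * b + 1) mod p = 1"
    using \<open>p > 1\<close> by (metis add.commute mod_less mod_mult_self2 mult.commute)
  then have "f x = (f ^^ ((p * b + 1) mod p)) x"
    by simp
  also have "\<dots> = (f ^^ (d * a)) x"
    using funpow_mod_eq[OF assms(1)] bezout by simp
  also have "\<dots> = x"
    using funpow_mod_eq[OF assms(2), of "d * a"] by simp
  finally show ?thesis .
qed

lemma funpow_fixpoint_iff:
  fixes p :: nat
  assumes "(f ^^ p) x = x" "p > 0"
  shows "f ((f ^^ i) x) = (f ^^ i) x \<longleftrightarrow> f x = x"
proof
  assume fixed: "f ((f ^^ i) x) = (f ^^ i) x"
  have "(f ^^ n) ((f ^^ i) x) = (f ^^ i) x" for n
    by (induction n) (simp_all add: fixed)
  then have "(f ^^ (p * i - i)) ((f ^^ i) x) = (f ^^ i) x" .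
  moreover have "(f ^^ (p * i - i)) ((f ^^ i) x) = (f ^^ (p * i)) x"
    using \<open>p > 0\<close> by (simp add: funpow_add[symmetric, THEN fun_cong, simplified])
  moreover have "(f ^^ (p * i)) x = x"
    using funpow_mod_eq[OF assms(1), of "p * i"] by simp
  ultimately have "(f ^^ i) x = x" by simp
  then show "f x = x" using fixed by simp
next
  assume "f x = x"
  then show "f ((f ^^ i) x) = (f ^^ i) x" by (induction i) simp_all
qed

lemma inj_on_funpow_if_prime_period:
  fixes p :: nat
  assumes "prime p" "(f ^^ p) x = x" "f x \<noteq> x"
  shows "inj_on (\<lambda>i. (f ^^ i) x) {..<p}"
proof -
  have distinct: "(f ^^ i) x \<noteq> (f ^^ j) x" if "i < j" "j < p" for i j
  proof
    assume eq: "(f ^^ i) x = (f ^^ j) x"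
    define y where "y = (f ^^ i) x"
    have "(f ^^ p) y = y"
      using assms(2) funpow_add[of p i f] funpow_add[of i p f] by (metis add.commute comp_apply y_def)
    moreover have "(f ^^ (j - i)) y = (f ^^ (j - i + i)) x"
      by (simp add: y_def funpow_add)
    then have "(f ^^ (j - i)) y = y"
      using eq \<open>i < j\<close> by (simp add: y_def)
    moreover have "coprime (j - i) p"
    proof -
      have "\<not> p dvd j - i"
        using that by (auto dest: dvd_imp_le)
      then show ?thesis
        using prime_imp_coprime[OF \<open>prime p\<close>] coprime_commute by blast
    qed
    moreover have "j - i \<noteq> 0" "p > 1"
      using that prime_gt_1_nat[OF \<open>prime p\<close>] by auto
    ultimately have "f y = y"
      by (rule fixpoint_if_coprime_periods)
    then show False
      using funpow_fixpoint_iff[OF assms(2) prime_gt_0_nat[OF \<open>prime p\<close>]] assms(3)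
      unfolding y_def by blast
  qed
  show ?thesis
  proof (rule inj_onI)
    fix i j
    assume "i \<in> {..<p}" "j \<in> {..<p}" "(f ^^ i) x = (f ^^ j) x"
    then show "i = j"
      using distinct[of i j] distinct[of j i] by (cases i j rule: linorder_cases) auto
  qed
qed

lemma prime_period_orbitE:
  fixes p :: nat
  assumes "f ` S \<subseteq> S" "\<And>y. y \<in> S \<Longrightarrow> (f ^^ p) y = y" "prime p" "x \<in> S" "f x \<noteq> x"
  obtains orb where "orb \<subseteq> S" "card orb = p" "f ` (S - orb) \<subseteq> S - orb" "\<And>z. z \<in> orb \<Longrightarrow> f z \<noteq> z"
proof
  have "p > 0"
    using \<open>prime p\<close> by (simp add: prime_gt_0_nat)
  have period: "(f ^^ p) x = x"
    using assms(2,4) .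
  define orb where "orb = (\<lambda>i. (f ^^ i) x) ` {..<p}"
  have in_orb: "(f ^^ n) x \<in> orb" for n
    using funpow_mod_eq[OF period, of n] \<open>p > 0\<close> unfolding orb_def
    by (metis image_eqI lessThan_iff mod_less_divisor)
  have "(f ^^ n) x \<in> S" for n
    by (induction n) (use assms(1,4) in auto)
  then show "orb \<subseteq> S"
    unfolding orb_def by blast
  show "card orb = p"
    unfolding orb_def
    using card_image[OF inj_on_funpow_if_prime_period[OF \<open>prime p\<close> period assms(5)]] by simp
  show "f z \<noteq> z" if "z \<in> orb" for z
    using that funpow_fixpoint_iff[OF period \<open>p > 0\<close>] assms(5) unfolding orb_def by blast
  have "f y \<notin> orb" if "y \<in> S - orb" for y
  proof
    assume "f y \<in> orb"
    then obtain i where i: "f y = (f ^^ i) x"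
      unfolding orb_def by blast
    have "y = (f ^^ Suc (p - 1)) y"
      using assms(2) that \<open>p > 0\<close> by simp
    also have "\<dots> = (f ^^ (p - 1 + i)) x"
      by (simp only: funpow_Suc_right funpow_add comp_apply i)
    finally show False
      using in_orb that by simp
  qed
  then show "f ` (S - orb) \<subseteq> S - orb"
    using assms(1) by blast
qed

lemma card_mod_prime_eq_card_fixpoints:
  fixes p :: nat
  assumes "finite S" "f ` S \<subseteq> S" "\<And>x. x \<in> S \<Longrightarrow> (f ^^ p) x = x" "prime p"
  shows "card S mod p = card {x \<in> S. f x = x} mod p"
  using assms(1-3)
proof (induction "card S" arbitrary: S rule: less_induct)
  case less
  show ?case
  proof (cases "\<forall>x \<in> S. f x = x")
    case True
    then have "{x \<in> S. f x = x} = S" by blast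
    then show ?thesis by simp
  next
    case False
    then obtain x where x: "x \<in> S" "f x \<noteq> x" by blast
    obtain orb where orb: "orb \<subseteq> S" "card orb = p"
      "f ` (S - orb) \<subseteq> S - orb" "\<And>z. z \<in> orb \<Longrightarrow> f z \<noteq> z"
      using prime_period_orbitE[OF less.prems(2,3) \<open>prime p\<close> x] by blast
    have card_S: "card S = card (S - orb) + p"
      using card_Diff_subset[OF finite_subset[OF orb(1) less.prems(1)] orb(1)]
        card_mono[OF less.prems(1) orb(1)] orb(2) by simp
    have "card (S - orb) mod p = card {y \<in> S - orb. f y = y} mod p"
      using less.hyps[of "S - orb"] card_S prime_gt_0_nat[OF \<open>prime p\<close>] orb(3) less.prems by auto
    moreover have "{y \<in> S - orb. f y = y} = {y \<in> S. f y = y}"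
      using orb(4) by blast
    ultimately show ?thesis
      using card_S by simp
  qed
qed

lemma three_is_prime_nat: "prime (3 :: nat)"
proof -
  have "{2..<3 :: nat} = {2}"
    by auto
  then show ?thesis
    by (simp add: prime_nat_iff')
qed

lemma card_eq_twice_card_edges:
  assumes "finite R" "sym R" "irrefl R"
  shows "card R = 2 * card {{x, y} | x y. (x, y) \<in> R}"
proof -
  define edge where "edge = (\<lambda>(x, y). {x, y} :: 'a set)"
  define edges where "edges = {{x, y} | x y. (x, y) \<in> R}"
  have edges_eq: "edges = edge ` R"
    unfolding edges_def edge_def by force
  have fibre: "card {q \<in> R. edge q = E} = 2" if "E \<in> edges" for E
  proof -
    from \<open>E \<in> edges\<close> obtain x y where E: "E = {x, y}" "(x, y) \<in> R"
      unfolding edges_def by blast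
    have "x \<noteq> y"
      using E(2) \<open>irrefl R\<close> by (auto simp: irrefl_def)
    moreover have "{q \<in> R. edge q = E} = {(x, y), (y, x)}"
      using E \<open>sym R\<close> unfolding edge_def by (auto simp: doubleton_eq_iff dest: symD)
    ultimately show ?thesis by simp
  qed
  have "R = (\<Union>E \<in> edges. {q \<in> R. edge q = E})"
    unfolding edges_eq by blast
  then have "card R = card (\<Union>E \<in> edges. {q \<in> R. edge q = E})"
    by simp
  also have "\<dots> = (\<Sum>E \<in> edges. card {q \<in> R. edge q = E})"
    by (rule card_UN_disjoint) (use \<open>finite R\<close> in \<open>auto simp: edges_eq\<close>)
  also have "\<dots> = 2 * card edges"
    using fibre by simp
  finally show ?thesis
    unfolding edges_def .
qed

lemma card_edges_containing:
  assumes "sym R" "irrefl R"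
  shows "card {E \<in> {{x, y} | x y. (x, y) \<in> R}. v \<in> E} = card {y. (v, y) \<in> R}"
proof -
  have "{E \<in> {{x, y} | x y. (x, y) \<in> R}. v \<in> E} = (\<lambda>y. {v, y}) ` {y. (v, y) \<in> R}"
    using \<open>sym R\<close> by (auto dest: symD)
  moreover have "inj_on (\<lambda>y. {v, y}) {y. (v, y) \<in> R}"
    using \<open>irrefl R\<close> by (auto intro!: inj_onI simp: irrefl_def doubleton_eq_iff)
  ultimately show ?thesis
    by (simp add: card_image)
qed

lemma card_gaps:
  assumes "finite P" "D \<subseteq> P \<times> P"
  shows "card (gaps P D) = card P * card P - card D"
  unfolding gaps_def using assms
  by (simp add: card_Diff_subset finite_subset card_cartesian_product)

lemma irrefl_gaps:
  assumes "gaps P D \<subseteq> O2 P D m e \<times> O2 P D m e"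
  shows "irrefl (gaps P D)"
  using assms unfolding gaps_def O2_def irrefl_def by auto

lemma card_gaps_eq_twice_card_gap_edges:
  assumes "finite P" "sym (gaps P D)" "irrefl (gaps P D)"
  shows "card (gaps P D) = 2 * card (gap_edges P D)"
  unfolding gap_edges_def using card_eq_twice_card_edges[OF _ assms(2,3)] assms(1)
  by (simp add: gaps_def)

lemma gap_degree_eq_card_diff_row:
  assumes "finite P" "sym (gaps P D)" "irrefl (gaps P D)" "v \<in> P"
  shows "gap_degree P D v = card P - card {y \<in> P. (v, y) \<in> D}"
proof -
  have "{y. (v, y) \<in> gaps P D} = P - {y \<in> P. (v, y) \<in> D}"
    using assms(4) unfolding gaps_def by auto
  then show ?thesis
    unfolding gap_degree_def gap_edges_def card_edges_containing[OF assms(2,3)]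
    using assms(1) by (simp add: card_Diff_subset)
qed

locale partial_loop =
  fixes P :: "'a set" and D :: "('a \<times> 'a) set" and m :: "'a \<Rightarrow> 'a \<Rightarrow> 'a" and e :: 'a
  assumes partial_ip_loop: "partial_ip_loop P D m e"
begin

abbreviation loop_inv :: "'a \<Rightarrow> 'a" where
  "loop_inv \<equiv> ploop_inv P D m e"

lemma dom_subset: "D \<subseteq> P \<times> P"
  using partial_ip_loop unfolding partial_ip_loop_def by blast

lemma mult_closed: "(x, y) \<in> D \<Longrightarrow> m x y \<in> P"
  using partial_ip_loop unfolding partial_ip_loop_def by blast

lemma unit_closed: "e \<in> P"
  using partial_ip_loop unfolding partial_ip_loop_def by blast

lemma unit_mult:
  assumes "x \<in> P"
  shows "(e, x) \<in> D" "(x, e) \<in> D" "m e x = x" "m x e = x"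
  using partial_ip_loop assms unfolding partial_ip_loop_def by blast+

lemma cancel:
  assumes "(x, y) \<in> D"
  shows "(loop_inv x, m x y) \<in> D" "m (loop_inv x) (m x y) = y"
    and "(m x y, loop_inv y) \<in> D" "m (m x y) (loop_inv y) = x"
  using partial_ip_loop assms unfolding partial_ip_loop_def by blast+

lemma inverse_unique_ex:
  "x \<in> P \<Longrightarrow> \<exists>!y. y \<in> P \<and> (x, y) \<in> D \<and> (y, x) \<in> D \<and> m x y = e \<and> m y x = e"
  using partial_ip_loop unfolding partial_ip_loop_def by blast

lemma loop_inv_spec:
  assumes "x \<in> P"
  shows "loop_inv x \<in> P" "(x, loop_inv x) \<in> D" "(loop_inv x, x) \<in> D"
    and "m x (loop_inv x) = e" "m (loop_inv x) x = e"
  using theI'[OF inverse_unique_ex[OF assms]] unfolding ploop_inv_def by blast+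

lemma loop_inv_eqI:
  assumes "x \<in> P" "y \<in> P" "(x, y) \<in> D" "(y, x) \<in> D" "m x y = e" "m y x = e"
  shows "loop_inv x = y"
  unfolding ploop_inv_def using assms inverse_unique_ex[OF assms(1)] by (intro the1_equality) auto

lemma loop_inv_inv: "x \<in> P \<Longrightarrow> loop_inv (loop_inv x) = x"
  using loop_inv_spec[of x] by (intro loop_inv_eqI) auto

lemma loop_inv_unit: "loop_inv e = e"
  using unit_closed unit_mult[OF unit_closed] by (intro loop_inv_eqI) auto

lemma loop_inv_O2: "x \<in> O2 P D m e \<Longrightarrow> loop_inv x = x"
  unfolding O2_def by (intro loop_inv_eqI) auto

lemma mult_inv_of_mult:
  assumes "(x, y) \<in> D"
  shows "(y, loop_inv (m x y)) \<in> D" "m y (loop_inv (m x y)) = loop_inv x"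
  using cancel[OF assms] cancel[of "loop_inv x" "m x y"] by auto

lemma dom_sym_on_O2:
  assumes "(x, y) \<in> D" "x \<in> O2 P D m e" "y \<in> O2 P D m e"
  shows "(y, x) \<in> D"
  using mult_inv_of_mult[OF assms(1)] cancel(1)[of y "loop_inv (m x y)"] assms(2,3)
  by (simp add: loop_inv_O2)

lemma card_row_even:
  assumes "finite P" "v \<in> O2 P D m e"
  shows "even (card {y \<in> P. (v, y) \<in> D})"
proof -
  have v: "v \<in> P" "v \<noteq> e" "loop_inv v = v"
    using assms(2) loop_inv_O2 unfolding O2_def by auto
  let ?row = "{y \<in> P. (v, y) \<in> D}"
  have row_closed: "m v y \<in> ?row" and involution: "m v (m v y) = y" if "y \<in> ?row" for y
    using that cancel(1,2)[of v y] mult_closed[of v y] v(3) by auto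
  have "m v y \<noteq> y" if "y \<in> ?row" for y
  proof
    assume "m v y = y"
    then have "m y (loop_inv y) = v"
      using that cancel(4)[of v y] by simp
    then show False
      using that loop_inv_spec(4)[of y] v(2) by simp
  qed
  then have "{y \<in> ?row. m v y = y} = {}"
    by blast
  moreover have "card ?row mod 2 = card {y \<in> ?row. m v y = y} mod 2"
  proof (rule card_mod_prime_eq_card_fixpoints[OF _ _ _ two_is_prime_nat])
    show "finite ?row"
      using assms(1) by simp
    show "m v ` ?row \<subseteq> ?row"
      using row_closed by blast
    show "(m v ^^ 2) y = y" if "y \<in> ?row" for y
      using involution[OF that] by (simp add: numeral_2_eq_2)
  qed
  ultimately have "card ?row mod 2 = 0"
    by (metis card.empty mod_0)
  then show ?thesis
    by presburger
qed

text \<open>The cyclic shift of the triple \<open>(x, y, (x y)\<^sup>-\<^sup>1)\<close>.\<close>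

definition rotate :: "'a \<times> 'a \<Rightarrow> 'a \<times> 'a" where
  "rotate = (\<lambda>(x, y). (y, loop_inv (m x y)))"

lemma rotate_in_dom: "q \<in> D \<Longrightarrow> rotate q \<in> D"
  unfolding rotate_def using mult_inv_of_mult by (cases q) auto

lemma rotate_rotate_rotate:
  assumes "(x, y) \<in> D"
  shows "rotate (rotate (rotate (x, y))) = (x, y)"
proof -
  define z where "z = loop_inv (m x y)"
  have yz: "(y, z) \<in> D" "m y z = loop_inv x"
    using mult_inv_of_mult[OF assms] unfolding z_def by auto
  have "x \<in> P" "y \<in> P"
    using assms dom_subset by auto
  then have "rotate (rotate (x, y)) = (z, x)"
    using yz by (simp add: rotate_def z_def loop_inv_inv)
  moreover have "m z x = loop_inv y"
    using mult_inv_of_mult(2)[OF yz(1)] yz(2) \<open>x \<in> P\<close> by (simp add: loop_inv_inv)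
  then have "rotate (z, x) = (x, y)"
    using \<open>y \<in> P\<close> by (simp add: rotate_def loop_inv_inv)
  ultimately show ?thesis
    by simp
qed

lemma rotate_fixpoints:
  "{q \<in> D. rotate q = q} = (\<lambda>x. (x, x)) ` insert e (O3 P D m e)"
proof (intro set_eqI iffI)
  fix q
  assume "q \<in> {q \<in> D. rotate q = q}"
  then obtain x where q: "q = (x, x)" "(x, x) \<in> D" "loop_inv (m x x) = x"
    by (cases q) (auto simp: rotate_def)
  have "m x x \<in> P"
    using q(2) mult_closed by blast
  then have "x = e \<or> x \<in> O3 P D m e"
    using loop_inv_spec[of "m x x"] q dom_subset unfolding O3_def by auto
  then show "q \<in> (\<lambda>x. (x, x)) ` insert e (O3 P D m e)"
    using q(1) by blast
next
  fix q
  assume "q \<in> (\<lambda>x. (x, x)) ` insert e (O3 P D m e)"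
  then obtain x where q: "q = (x, x)" and "x = e \<or> x \<in> O3 P D m e"
    by blast
  then consider "x = e" | "x \<in> O3 P D m e"
    by blast
  then show "q \<in> {q \<in> D. rotate q = q}"
  proof cases
    case 1
    then show ?thesis
      using q unit_closed unit_mult loop_inv_unit by (simp add: rotate_def)
  next
    case 2
    then have x: "x \<in> P" "(x, x) \<in> D" "(x, m x x) \<in> D" "m x (m x x) = e"
      unfolding O3_def by auto
    have "m (loop_inv x) e = m x x"
      using cancel(2)[OF x(3)] x(4) by simp
    then have "loop_inv x = m x x"
      using unit_mult(4)[OF loop_inv_spec(1)[OF x(1)]] by simp
    then have "loop_inv (m x x) = x"
      using loop_inv_inv[OF x(1)] by simp
    then show ?thesis
      using q x(2) by (simp add: rotate_def)
  qed
qed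

lemma card_dom_mod_3:
  assumes "finite P"
  shows "card D mod 3 = Suc (card (O3 P D m e)) mod 3"
proof -
  have "finite D"
    using assms dom_subset finite_subset by blast
  have "card D mod 3 = card {q \<in> D. rotate q = q} mod 3"
  proof (rule card_mod_prime_eq_card_fixpoints[OF \<open>finite D\<close> _ _ three_is_prime_nat])
    show "rotate ` D \<subseteq> D"
      using rotate_in_dom by blast
    show "(rotate ^^ 3) q = q" if "q \<in> D" for q
      using rotate_rotate_rotate[of "fst q" "snd q"] that by (simp add: numeral_3_eq_3)
  qed
  also have "card {q \<in> D. rotate q = q} = Suc (card (O3 P D m e))"
  proof -
    have "finite (O3 P D m e)" "e \<notin> O3 P D m e"
      using assms unfolding O3_def by auto
    then show ?thesis
      unfolding rotate_fixpoints by (subst card_image) (auto simp: inj_on_def)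
  qed
  finally show ?thesis .
qed

lemma sym_gaps:
  assumes "gaps P D \<subseteq> O2 P D m e \<times> O2 P D m e"
  shows "sym (gaps P D)"
  using assms dom_sym_on_O2 unfolding gaps_def by (auto intro!: symI)

lemma even_gap_degree:
  assumes "finite P" "even (card P)" "gaps P D \<subseteq> O2 P D m e \<times> O2 P D m e"
    and "v \<in> gap_vertices P D m e"
  shows "even (gap_degree P D v)"
proof -
  have v: "v \<in> O2 P D m e" "v \<in> P"
    using assms(4) unfolding gap_vertices_def O2_def by auto
  have "gap_degree P D v = card P - card {y \<in> P. (v, y) \<in> D}"
    using gap_degree_eq_card_diff_row[OF assms(1) sym_gaps[OF assms(3)] irrefl_gaps[OF assms(3)] v(2)] .
  then show ?thesis
    using assms(2) card_row_even[OF assms(1) v(1)] by simp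
qed

lemma three_dvd_card_gap_edges:
  assumes "finite P" "card P mod 3 = 1" "3 dvd card (O3 P D m e)"
    and "gaps P D \<subseteq> O2 P D m e \<times> O2 P D m e"
  shows "3 dvd card (gap_edges P D)"
proof -
  have "card D \<le> card P * card P"
    using dom_subset assms(1) card_mono[of "P \<times> P" D] by (simp add: card_cartesian_product)
  moreover have "card P * card P mod 3 = 1"
    using assms(2) mod_mult_eq[of "card P" 3 "card P"] by simp
  moreover have "card D mod 3 = 1"
    using card_dom_mod_3[OF assms(1)] assms(3) by presburger
  ultimately have "3 dvd card (gaps P D)"
    unfolding card_gaps[OF assms(1) dom_subset]
    using mod_eq_dvd_iff_nat[of "card D" "card P * card P" 3] by simp
  moreover have "card (gaps P D) = 2 * card (gap_edges P D)"
    by (rule card_gaps_eq_twice_card_gap_edges[OF assms(1) sym_gaps[OF assms(4)] irrefl_gaps[OF assms(4)]])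
  ultimately show ?thesis
    by presburger
qed

end

theorem claim3:
  fixes P :: "'a set" and D :: "('a \<times> 'a) set" and m :: "'a \<Rightarrow> 'a \<Rightarrow> 'a" and e :: 'a
  assumes "finite P"
    and "partial_ip_loop P D m e"
    and "3 dvd card (O3 P D m e)"
    and "card P mod 6 = 4"
    and "gaps P D \<subseteq> O2 P D m e \<times> O2 P D m e"
  shows "(\<forall>v \<in> gap_vertices P D m e. even (gap_degree P D v)) \<and> 3 dvd card (gap_edges P D)"
proof -
  interpret partial_loop P D m e
    by (rule partial_loop.intro) (fact assms(2))
  have "even (card P)" "card P mod 3 = 1"
    using assms(4) by presburger+
  then show ?thesis
    using even_gap_degree three_dvd_card_gap_edges assms(1,3,5) by blast
qed

end
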